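(* Assume the standing assumptions below and let $s>0$. Then every solution $(\phi_1,\phi_2,\phi_3)$ of (TW) (nonnegative, bounded, $C^1$) satisfies $(\phi_1,\phi_2,\phi_3)(z)\to(0,0,0)$ as $z\to-\infty$.
   Context: Standing assumptions. $d_1,d_2,d_3,r_1,r_2,r_3,a,b,h,k$ are positive constants with $a>1$, $0<h,k<1$, $0<b<\frac{1}{2(a-1)}$. For $i=1,2,3$ the kernel $J_i:\mathbb{R}\to\mathbb{R}$ satisfies: (J1) $J_i\ge0$ is Lebesgue measurable, $\int_{\mathbb{R}}J_i=1$, and there are $\eta_i>0$ and $y_i^-<0<y_i^+$ such that $J_i>0$ on $(y_i^--\eta_i,y_i^-+\eta_i)$ and on $(y_i^+-\eta_i,y_i^++\eta_i)$; (J2) $\int_{\mathbb{R}}J_i(y)\,y\,dy=0$; (J3) there are $-\infty\le\tilde\lambda_i<0<\hat\lambda_i\le+\infty$ such that $I_i(\lambda):=\int_{\mathbb{R}}J_i(y)e^{\lambda y}dy<+\infty$ for $\lambda\in(\tilde\lambda_i,\hat\lambda_i)$ and $I_i(\lambda)\to+\infty$ as $\lambda\downarrow\tilde\lambda_i$ and as $\lambda\uparrow\hat\lambda_i$. $\alpha:\mathbb{R}\to\mathbb{R}$ is continuous and satisfies: ($\alpha$1) $\alpha$ has finite limits $\alpha(\pm\infty)$ with $\alpha(-\infty)<0<\alpha(+\infty)$, and $\alpha(z)\le\alpha(+\infty)$ for all $z$; ($\alpha$2) there exist $C>0$, $\rho>0$ with $\alpha(+\infty)-\alpha(z)\le Ce^{-\rho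 z}$ for all sufficiently large $z$. For a function $\phi$ and $i\in\{1,2,3\}$, $\mathcal N_i[\phi](z):=\int_{\mathbb{R}}J_i(y)\phi(z-y)dy-\phi(z)$. For $s>0$, system (TW) is $$\begin{cases}-s\phi_1'=d_1\mathcal N_1[\phi_1]+r_1\phi_1[-1-\phi_1-k\phi_2+a\phi_3],\\ -s\phi_2'=d_2\mathcal N_2[\phi_2]+r_2\phi_2[-1-h\phi_1-\phi_2+a\phi_3],\\ -s\phi_3'=d_3\mathcal N_3[\phi_3]+r_3\phi_3[\alpha(z)-b\phi_1-b\phi_2-\phi_3],\end{cases}\quad z\in\mathbb{R},$$ and a solution means a triple of nonnegative bounded $C^1(\mathbb{R})$ functions satisfying it. *)

theory Defs
  imports "HOL-Analysis.Analysis"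
begin

definition kernel_mgf :: "(real \<Rightarrow> real) \<Rightarrow> real \<Rightarrow> ennreal" where
  "kernel_mgf J l = (\<integral>\<^sup>+ y. ennreal (J y * exp (l * y)) \<partial>lebesgue)"

definition kernel_cond :: "(real \<Rightarrow> real) \<Rightarrow> bool" where
  "kernel_cond J \<longleftrightarrow>
     \<comment> \<open>(J1)\<close>
     (\<forall>y. 0 \<le> J y) \<and> J \<in> borel_measurable lebesgue \<and>
     integrable lebesgue J \<and> (LINT y|lebesgue. J y) = 1 \<and>
     (\<exists>\<eta> ym yp. \<eta> > 0 \<and> ym < 0 \<and> 0 < yp \<and>
        (\<forall>y. ym - \<eta> < y \<and> y < ym + \<eta> \<longrightarrow> J y > 0) \<and>
        (\<forall>y. yp - \<eta> < y \<and> y < yp + \<eta> \<longrightarrow> J y > 0)) \<and>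
     \<comment> \<open>(J2)\<close>
     (LINT y|lebesgue. J y * y) = 0 \<and>
     \<comment> \<open>(J3)\<close>
     (\<exists>tl hl :: ereal. tl < 0 \<and> 0 < hl \<and>
        (\<forall>l. tl < ereal l \<and> ereal l < hl \<longrightarrow> kernel_mgf J l < \<infinity>) \<and>
        (kernel_mgf J \<longlongrightarrow> \<infinity>)
           (if tl = -\<infinity> then at_bot else at_right (real_of_ereal tl)) \<and>
        (kernel_mgf J \<longlongrightarrow> \<infinity>)
           (if hl = \<infinity> then at_top else at_left (real_of_ereal hl)))"

definition alpha_cond :: "(real \<Rightarrow> real) \<Rightarrow> bool" where
  "alpha_cond \<alpha> \<longleftrightarrow> continuous_on UNIV \<alpha> \<and>
     (\<exists>am ap. (\<alpha> \<longlongrightarrow> am) at_bot \<and> (\<alpha> \<longlongrightarrow> ap) at_top \<and> am < 0 \<and> 0 < ap \<and>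
        (\<forall>z. \<alpha> z \<le> ap) \<and>
        (\<exists>C \<rho>. C > 0 \<and> \<rho> > 0 \<and>
           (\<forall>\<^sub>F z in at_top. ap - \<alpha> z \<le> C * exp (- \<rho> * z))))"

definition nonlocal_op :: "(real \<Rightarrow> real) \<Rightarrow> (real \<Rightarrow> real) \<Rightarrow> real \<Rightarrow> real" where
  "nonlocal_op J \<phi> z = (LINT y|lebesgue. J y * \<phi> (z - y)) - \<phi> z"

definition admissible :: "(real \<Rightarrow> real) \<Rightarrow> bool" where
  "admissible \<phi> \<longleftrightarrow> (\<forall>z. 0 \<le> \<phi> z) \<and> bounded (range \<phi>) \<and> \<phi> C1_differentiable_on UNIV"

end

theory Submission
  imports Defs
begin

text \<open>Each component \<open>\<phi>\<close> of a solution satisfies \<open>- s \<phi>' = d \<N>[\<phi>] + r \<phi> q\<close> with a bounded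
  rate \<open>q\<close>; for \<open>\<phi>\<^sub>3\<close> the rate is eventually negative at \<open>-\<infinity>\<close> because \<open>\<alpha>(-\<infinity>) < 0\<close>, and once
  \<open>\<phi>\<^sub>3 \<rightarrow> 0\<close> the same holds for \<open>\<phi>\<^sub>1, \<phi>\<^sub>2\<close>, whose rates are at most \<open>-1 + a \<phi>\<^sub>3\<close>.
  For such a component, \<open>\<N>[\<phi>]\<close> is the derivative of \<open>\<N>[\<Phi>]\<close>, \<open>\<Phi>\<close> a primitive of \<open>\<phi>\<close>, which is
  bounded since \<open>\<Phi>\<close> is Lipschitz and (J3) gives \<open>J\<close> a first moment.  Hence
  \<open>G = s \<phi> + d \<N>[\<Phi>]\<close> is bounded and nondecreasing near \<open>-\<infinity>\<close> with \<open>G' \<ge> c \<phi>\<close>; as \<open>\<phi>\<close> is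
  Lipschitz, this forces \<open>\<phi>(z) \<rightarrow> 0\<close>.\<close>

lemma increment_ge_of_deriv_ge:
  fixes f f' :: "real \<Rightarrow> real"
  assumes "a \<le> b"
    and "\<And>x. a \<le> x \<Longrightarrow> x \<le> b \<Longrightarrow> (f has_real_derivative f' x) (at x)"
    and "\<And>x. a \<le> x \<Longrightarrow> x \<le> b \<Longrightarrow> m \<le> f' x"
  shows "(b - a) * m \<le> f b - f a"
proof (cases "a = b")
  case False
  with assms(1) have "a < b"
    by simp
  then obtain \<xi> where "a < \<xi>" "\<xi> < b" "f b - f a = (b - a) * f' \<xi>"
    using MVT2[OF _ assms(2)] by blast
  then show ?thesis
    using assms(1) assms(3)[of \<xi>] by (simp add: mult_left_mono)
qed simp

lemma lipschitz_const_nonneg: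
  fixes f :: "real \<Rightarrow> real"
  assumes "\<And>u v. \<bar>f u - f v\<bar> \<le> L * \<bar>u - v\<bar>"
  shows "0 \<le> L"
  using assms[of 1 0] by (metis abs_ge_zero abs_one diff_zero mult.right_neutral order_trans)

lemma lipschitz_of_deriv_bounded:
  fixes f f' :: "real \<Rightarrow> real"
  assumes "\<And>x. (f has_real_derivative f' x) (at x)" and "\<And>x. \<bar>f' x\<bar> \<le> B"
  shows "\<bar>f u - f v\<bar> \<le> B * \<bar>u - v\<bar>"
  using field_differentiable_bound[of UNIV f f' B u v] assms by simp


lemma primitive_taylor_remainder_le:
  fixes F f :: "real \<Rightarrow> real"
  assumes F: "\<And>x. (F has_real_derivative f x) (at x)"
    and lip: "\<And>u v. \<bar>f u - f v\<bar> \<le> B * \<bar>u - v\<bar>"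
  shows "\<bar>F (u + t) - F u - t * f u\<bar> \<le> B * t\<^sup>2"
proof -
  define k where "k \<tau> = F (u + \<tau>) - \<tau> * f u" for \<tau>
  have k: "(k has_real_derivative f (u + \<tau>) - f u) (at \<tau> within closed_segment 0 t)" for \<tau>
    unfolding k_def by (auto intro!: derivative_eq_intros F[THEN DERIV_chain2])
  have bound: "\<bar>f (u + \<tau>) - f u\<bar> \<le> B * \<bar>t\<bar>" if "\<tau> \<in> closed_segment 0 t" for \<tau>
  proof -
    have "\<bar>\<tau>\<bar> \<le> \<bar>t\<bar>"
      using that by (auto simp: closed_segment_eq_real_ivl split: if_splits)
    then show ?thesis
      using lip[of "u + \<tau>" u] lipschitz_const_nonneg[OF lip] by (smt (verit) mult_left_mono)
  qed
  have "\<bar>k t - k 0\<bar> \<le> B * \<bar>t\<bar> * \<bar>t - 0\<bar>"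
    using field_differentiable_bound[OF convex_closed_segment k, of "B * \<bar>t\<bar>" t 0] bound
    by simp
  then show ?thesis
    by (simp add: k_def power2_eq_square abs_mult_self_eq mult.assoc)
qed

lemma DERIV_of_quadratic_remainder:
  fixes f :: "real \<Rightarrow> real"
  assumes "\<And>t. \<bar>f (z + t) - f z - t * D\<bar> \<le> C * t\<^sup>2"
  shows "(f has_real_derivative D) (at z)"
  unfolding DERIV_def LIM_eq
proof (intro allI impI)
  fix r :: real
  assume "r > 0"
  have "C \<ge> 0"
    using assms[of 1] by simp
  show "\<exists>\<delta>>0. \<forall>t. t \<noteq> 0 \<and> norm (t - 0) < \<delta> \<longrightarrow> norm ((f (z + t) - f z) / t - D) < r"
  proof (intro exI[of _ "r / (C + 1)"] conjI allI impI)
    show "r / (C + 1) > 0"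
      using \<open>r > 0\<close> \<open>C \<ge> 0\<close> by simp
    fix t :: real
    assume t: "t \<noteq> 0 \<and> norm (t - 0) < r / (C + 1)"
    have "norm ((f (z + t) - f z) / t - D) = \<bar>f (z + t) - f z - t * D\<bar> / \<bar>t\<bar>"
      using t by (simp add: field_simps abs_divide)
    also have "\<dots> \<le> C * t\<^sup>2 / \<bar>t\<bar>"
      using assms[of t] by (simp add: divide_right_mono)
    also have "\<dots> = C * \<bar>t\<bar>"
      using t by (simp add: power2_eq_square field_simps)
    also have "\<dots> < r"
      using t \<open>C \<ge> 0\<close> \<open>r > 0\<close> by (simp add: field_simps) (smt (verit) mult_left_mono)
    finally show "norm ((f (z + t) - f z) / t - D) < r" .
  qed
qed

lemma increment_ge_near_large_value:
  fixes G g \<phi> :: "real \<Rightarrow> real"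
  assumes G: "\<And>z. x - \<delta> \<le> z \<Longrightarrow> z \<le> x \<Longrightarrow> (G has_real_derivative g z) (at z)"
    and g: "\<And>z. x - \<delta> \<le> z \<Longrightarrow> z \<le> x \<Longrightarrow> c * \<phi> z \<le> g z" and "c \<ge> 0"
    and lip: "\<And>u v. \<bar>\<phi> u - \<phi> v\<bar> \<le> L * \<bar>u - v\<bar>"
    and "0 \<le> \<delta>" "L * \<delta> \<le> \<epsilon> / 2" "\<epsilon> \<le> \<phi> x"
  shows "\<delta> * (c * (\<epsilon> / 2)) \<le> G x - G (x - \<delta>)"
proof -
  have "c * (\<epsilon> / 2) \<le> g \<xi>" if "x - \<delta> \<le> \<xi>" "\<xi> \<le> x" for \<xi>
  proof -
    have "\<phi> x - \<phi> \<xi> \<le> L * \<delta>"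
      using lip[of x \<xi>] that lipschitz_const_nonneg[OF lip] by (smt (verit) mult_left_mono)
    then have "\<epsilon> / 2 \<le> \<phi> \<xi>"
      using assms(6,7) by linarith
    then show ?thesis
      using g[OF that] \<open>c \<ge> 0\<close> by (smt (verit) mult_left_mono)
  qed
  then have "(x - (x - \<delta>)) * (c * (\<epsilon> / 2)) \<le> G x - G (x - \<delta>)"
    using G \<open>0 \<le> \<delta>\<close> by (intro increment_ge_of_deriv_ge) auto
  then show ?thesis
    by simp
qed

text \<open>A Barbalat-type argument: \<open>G\<close> is nondecreasing and bounded below on \<open>(-\<infinity>, z0]\<close>, so
  far to the left its increments over intervals of a fixed length are small, whereas a
  value \<open>\<phi> x \<ge> \<epsilon>\<close> of the Lipschitz function \<open>\<phi>\<close> forces an increment \<open>\<delta> c \<epsilon> / 2\<close>.\<close>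
lemma tendsto_zero_at_bot_if_primitive_bdd_below:
  fixes G g \<phi> :: "real \<Rightarrow> real"
  assumes G: "\<And>z. z \<le> z0 \<Longrightarrow> (G has_real_derivative g z) (at z)"
    and g: "\<And>z. z \<le> z0 \<Longrightarrow> c * \<phi> z \<le> g z" and "c > 0"
    and bdd: "bdd_below (G ` {..z0})"
    and \<phi>_nonneg: "\<And>z. 0 \<le> \<phi> z" and lip: "\<And>u v. \<bar>\<phi> u - \<phi> v\<bar> \<le> L * \<bar>u - v\<bar>"
  shows "(\<phi> \<longlongrightarrow> 0) at_bot"
proof -
  have G_mono: "G x \<le> G y" if "x \<le> y" "y \<le> z0" for x y
    using increment_ge_of_deriv_ge[of x y G g 0] that G g \<phi>_nonneg \<open>c > 0\<close>
    by (smt (verit) mult_nonneg_nonneg)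
  define I where "I = Inf (G ` {..z0})"
  have I_le: "I \<le> G x" if "x \<le> z0" for x
    unfolding I_def using bdd that by (auto intro: cInf_lower)
  have "\<exists>N. \<forall>x\<le>N. \<phi> x < \<epsilon>" if "\<epsilon> > 0" for \<epsilon>
  proof -
    define \<delta> where "\<delta> = \<epsilon> / (2 * (L + 1))"
    have "\<delta> > 0" "L * \<delta> \<le> \<epsilon> / 2"
      using \<open>\<epsilon> > 0\<close> lipschitz_const_nonneg[OF lip] by (simp_all add: \<delta>_def field_simps)
    define \<eta> where "\<eta> = \<delta> * (c * (\<epsilon> / 2))"
    have "\<eta> > 0"
      using \<open>\<delta> > 0\<close> \<open>c > 0\<close> \<open>\<epsilon> > 0\<close> by (simp add: \<eta>_def)
    then obtain y where "y \<le> z0" "G y < I + \<eta>"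
      using cInf_lessD[of "G ` {..z0}" "I + \<eta>"] by (force simp: I_def)
    have "\<phi> x < \<epsilon>" if "x \<le> y" for x
    proof (rule ccontr)
      assume "\<not> \<phi> x < \<epsilon>"
      have "\<eta> \<le> G x - G (x - \<delta>)"
        unfolding \<eta>_def
      proof (rule increment_ge_near_large_value[where g = g and \<phi> = \<phi>, OF _ _ _ lip])
        show "(G has_real_derivative g z) (at z)" "c * \<phi> z \<le> g z" if "z \<le> x" for z
          using G g that \<open>x \<le> y\<close> \<open>y \<le> z0\<close> by simp_all
      qed (use \<open>c > 0\<close> \<open>\<delta> > 0\<close> \<open>L * \<delta> \<le> \<epsilon> / 2\<close> \<open>\<not> \<phi> x < \<epsilon>\<close> in simp_all)
      moreover have "G x \<le> G y" "I \<le> G (x - \<delta>)"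
        using G_mono I_le \<open>x \<le> y\<close> \<open>y \<le> z0\<close> \<open>\<delta> > 0\<close> by simp_all
      ultimately show False
        using \<open>G y < I + \<eta>\<close> by linarith
    qed
    then show ?thesis
      by blast
  qed
  then show ?thesis
    unfolding tendsto_iff eventually_at_bot_linorder dist_real_def
    using \<phi>_nonneg by simp
qed

lemma ident_borel_measurable_lebesgue [measurable]:
  "(\<lambda>x::real. x) \<in> borel_measurable lebesgue"
  using id_borel_measurable_lebesgue by (simp add: id_def)

lemma borel_measurable_lebesgue_shift:
  fixes f :: "real \<Rightarrow> real"
  assumes "continuous_on UNIV f"
  shows "(\<lambda>y. f (z - y)) \<in> borel_measurable lebesgue"
proof -
  have "continuous_on UNIV (\<lambda>y. f (z - y))"
    by (intro continuous_on_compose2[OF assms] continuous_intros) auto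
  then show ?thesis
    using continuous_imp_measurable_on_sets_lebesgue[of UNIV] by (simp add: lebesgue_on_UNIV_eq)
qed

lemma integrable_of_kernel_mgf_finite:
  assumes "\<And>y. 0 \<le> J y" "J \<in> borel_measurable lebesgue" "kernel_mgf J l < \<infinity>"
  shows "integrable lebesgue (\<lambda>y. J y * exp (l * y))"
proof (rule integrableI_bounded)
  show "(\<lambda>y. J y * exp (l * y)) \<in> borel_measurable lebesgue"
    using assms(2) by measurable
  have "(\<integral>\<^sup>+ y. ennreal (norm (J y * exp (l * y))) \<partial>lebesgue) = kernel_mgf J l"
    unfolding kernel_mgf_def using assms(1) by (intro nn_integral_cong) auto
  then show "(\<integral>\<^sup>+ y. ennreal (norm (J y * exp (l * y))) \<partial>lebesgue) < \<infinity>"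
    using assms(3) by simp
qed

lemma kernel_cond_mgf_finite_near_zero:
  assumes "kernel_cond J"
  obtains l where "l > 0" "kernel_mgf J l < \<infinity>" "kernel_mgf J (- l) < \<infinity>"
proof -
  obtain tl hl :: ereal where "tl < 0" "0 < hl"
    and fin: "\<And>l. tl < ereal l \<Longrightarrow> ereal l < hl \<Longrightarrow> kernel_mgf J l < \<infinity>"
    using assms unfolding kernel_cond_def by blast
  obtain l1 :: real where "tl < ereal l1" "l1 < 0"
    using ereal_dense2[OF \<open>tl < 0\<close>] by (auto simp: zero_ereal_def)
  obtain l2 :: real where "0 < l2" "ereal l2 < hl"
    using ereal_dense2[OF \<open>0 < hl\<close>] by (auto simp: zero_ereal_def)
  define l where "l = min (- l1) l2"
  have "ereal l1 \<le> ereal (- l)" "ereal (- l) \<le> 0" "0 \<le> ereal l" "ereal l \<le> ereal l2"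
    using \<open>l1 < 0\<close> \<open>0 < l2\<close> by (auto simp: l_def zero_ereal_def)
  then have "tl < ereal (- l)" "ereal (- l) < hl" "tl < ereal l" "ereal l < hl"
    using \<open>tl < ereal l1\<close> \<open>ereal l2 < hl\<close> \<open>tl < 0\<close> \<open>0 < hl\<close>
    by (meson order.strict_trans1 order.strict_trans2)+
  then show thesis
    using that[of l] fin \<open>l1 < 0\<close> \<open>0 < l2\<close> by (simp add: l_def)
qed

text \<open>The first absolute moment is dominated by the exponential moments at \<open>\<pm>l\<close>,
  since \<open>l \<bar>y\<bar> \<le> exp (- l y) + exp (l y)\<close>.\<close>
lemma kernel_cond_integrable_abs_moment:
  assumes "kernel_cond J"
  shows "integrable lebesgue (\<lambda>y. J y * \<bar>y\<bar>)"
proof -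
  have J_nonneg: "\<And>y. 0 \<le> J y" and J_meas: "J \<in> borel_measurable lebesgue"
    using assms unfolding kernel_cond_def by auto
  obtain l where "l > 0" "kernel_mgf J l < \<infinity>" "kernel_mgf J (- l) < \<infinity>"
    using kernel_cond_mgf_finite_near_zero[OF assms] by blast
  then have dom: "integrable lebesgue (\<lambda>y. (J y * exp (- l * y) + J y * exp (l * y)) / l)"
    using integrable_of_kernel_mgf_finite[OF J_nonneg J_meas, of l]
      integrable_of_kernel_mgf_finite[OF J_nonneg J_meas, of "- l"]
    by (intro integrable_divide integrable_add) simp_all
  show ?thesis
  proof (rule Bochner_Integration.integrable_bound[OF dom])
    show "(\<lambda>y. J y * \<bar>y\<bar>) \<in> borel_measurable lebesgue"
      using J_meas by measurable
    show "AE y in lebesgue. norm (J y * \<bar>y\<bar>) \<le> norm ((J y * exp (- l * y) + J y * exp (l * y)) / l)"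
    proof (rule AE_I2)
      fix y
      have "l * \<bar>y\<bar> \<le> exp (- l * y) + exp (l * y)"
      proof (cases "0 \<le> y")
        case True
        then show ?thesis
          using exp_ge_add_one_self[of "l * y"] exp_gt_zero[of "- l * y"] by linarith
      next
        case False
        then show ?thesis
          using exp_ge_add_one_self[of "- l * y"] exp_gt_zero[of "l * y"] by linarith
      qed
      then have "J y * \<bar>y\<bar> \<le> J y * ((exp (- l * y) + exp (l * y)) / l)"
        using J_nonneg[of y] \<open>l > 0\<close> by (intro mult_left_mono) (simp_all add: field_simps)
      then show "norm (J y * \<bar>y\<bar>) \<le> norm ((J y * exp (- l * y) + J y * exp (l * y)) / l)"
        using J_nonneg[of y] \<open>l > 0\<close> by (simp add: field_simps)
    qed
  qed
qed

locale moment_kernel =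
  fixes J :: "real \<Rightarrow> real"
  assumes J_nonneg: "\<And>y. 0 \<le> J y"
    and J_integrable: "integrable lebesgue J"
    and J_mass: "(LINT y|lebesgue. J y) = 1"
    and J_abs_moment: "integrable lebesgue (\<lambda>y. J y * \<bar>y\<bar>)"
begin

definition kernel_conv :: "(real \<Rightarrow> real) \<Rightarrow> real \<Rightarrow> real" where
  "kernel_conv f z = (LINT y|lebesgue. J y * f (z - y))"

lemma nonlocal_op_eq_kernel_conv: "nonlocal_op J f = (\<lambda>z. kernel_conv f z - f z)"
  by (simp add: fun_eq_iff nonlocal_op_def kernel_conv_def)

lemma J_measurable [measurable]: "J \<in> borel_measurable lebesgue"
  using J_integrable by auto

lemma integrable_conv:
  assumes "continuous_on UNIV f" "\<And>z. \<bar>f z\<bar> \<le> M"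
  shows "integrable lebesgue (\<lambda>y. J y * f (z - y))"
proof (rule Bochner_Integration.integrable_bound[of _ "\<lambda>y. M * J y"])
  show "integrable lebesgue (\<lambda>y. M * J y)"
    using J_integrable by simp
  show "(\<lambda>y. J y * f (z - y)) \<in> borel_measurable lebesgue"
    using borel_measurable_lebesgue_shift[OF assms(1)] by measurable
  show "AE y in lebesgue. norm (J y * f (z - y)) \<le> norm (M * J y)"
  proof (rule AE_I2)
    fix y
    have "J y * \<bar>f (z - y)\<bar> \<le> J y * M"
      using J_nonneg assms(2) by (rule mult_left_mono[rotated])
    moreover have "0 \<le> M"
      using assms(2)[of 0] by linarith
    ultimately show "norm (J y * f (z - y)) \<le> norm (M * J y)"
      using J_nonneg[of y] by (simp add: abs_mult mult.commute)
  qed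
qed

lemma nonlocal_op_abs_le:
  assumes "continuous_on UNIV f" "\<And>z. \<bar>f z\<bar> \<le> M"
  shows "\<bar>nonlocal_op J f z\<bar> \<le> 2 * M"
proof -
  have "\<bar>kernel_conv f z\<bar> \<le> (LINT y|lebesgue. \<bar>J y * f (z - y)\<bar>)"
    using integral_norm_bound[of lebesgue "\<lambda>y. J y * f (z - y)"] by (simp add: kernel_conv_def)
  also have "\<dots> \<le> (LINT y|lebesgue. M * J y)"
  proof (rule integral_mono)
    show "integrable lebesgue (\<lambda>y. \<bar>J y * f (z - y)\<bar>)"
      using integrable_conv[OF assms] by (rule integrable_abs)
    show "\<bar>J y * f (z - y)\<bar> \<le> M * J y" for y
      using mult_left_mono[OF assms(2)[of "z - y"] J_nonneg[of y]] J_nonneg[of y]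
      by (simp add: abs_mult mult.commute)
  qed (use J_integrable in simp)
  finally show ?thesis
    using J_mass assms(2)[of z] unfolding nonlocal_op_eq_kernel_conv by simp
qed

lemma integrable_conv_lipschitz:
  assumes "continuous_on UNIV F" "\<And>u v. \<bar>F u - F v\<bar> \<le> M * \<bar>u - v\<bar>"
  shows "integrable lebesgue (\<lambda>w. J w * F (z - w))"
proof (rule Bochner_Integration.integrable_bound[of _ "\<lambda>w. \<bar>F z\<bar> * J w + M * (J w * \<bar>w\<bar>)"])
  show "integrable lebesgue (\<lambda>w. \<bar>F z\<bar> * J w + M * (J w * \<bar>w\<bar>))"
    using J_integrable J_abs_moment by simp
  show "(\<lambda>w. J w * F (z - w)) \<in> borel_measurable lebesgue"
    using borel_measurable_lebesgue_shift[OF assms(1)] by measurable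
  show "AE w in lebesgue. norm (J w * F (z - w)) \<le> norm (\<bar>F z\<bar> * J w + M * (J w * \<bar>w\<bar>))"
  proof (rule AE_I2)
    fix w
    have "\<bar>F (z - w)\<bar> \<le> \<bar>F z\<bar> + M * \<bar>w\<bar>"
      using assms(2)[of "z - w" z] by simp
    then have "J w * \<bar>F (z - w)\<bar> \<le> J w * (\<bar>F z\<bar> + M * \<bar>w\<bar>)"
      using J_nonneg by (rule mult_left_mono)
    then show "norm (J w * F (z - w)) \<le> norm (\<bar>F z\<bar> * J w + M * (J w * \<bar>w\<bar>))"
      using J_nonneg[of w] lipschitz_const_nonneg[OF assms(2)] by (simp add: abs_mult algebra_simps)
  qed
qed

text \<open>Because \<open>J\<close> has mass one, \<open>nonlocal_op J F z = \<integral> J w (F (z - w) - F z) dw\<close>,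
  which the first moment controls.\<close>
lemma nonlocal_op_lipschitz_abs_le:
  assumes "continuous_on UNIV F" "\<And>u v. \<bar>F u - F v\<bar> \<le> M * \<bar>u - v\<bar>"
  shows "\<bar>nonlocal_op J F z\<bar> \<le> M * (LINT w|lebesgue. J w * \<bar>w\<bar>)"
proof -
  have int: "integrable lebesgue (\<lambda>w. J w * (F (z - w) - F z))"
    using integrable_conv_lipschitz[OF assms] J_integrable by (simp add: right_diff_distrib)
  have "nonlocal_op J F z = (LINT w|lebesgue. J w * (F (z - w) - F z))"
    using integrable_conv_lipschitz[OF assms, of z] J_integrable J_mass
    by (simp add: nonlocal_op_def right_diff_distrib)
  also have "\<bar>\<dots>\<bar> \<le> (LINT w|lebesgue. \<bar>J w * (F (z - w) - F z)\<bar>)"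
    using integral_norm_bound[of lebesgue "\<lambda>w. J w * (F (z - w) - F z)"] by simp
  also have "\<dots> \<le> (LINT w|lebesgue. M * (J w * \<bar>w\<bar>))"
  proof (rule integral_mono)
    show "\<bar>J w * (F (z - w) - F z)\<bar> \<le> M * (J w * \<bar>w\<bar>)" for w
      using mult_left_mono[OF assms(2)[of "z - w" z] J_nonneg[of w]] J_nonneg[of w]
      by (simp add: abs_mult mult_ac)
  qed (use int J_abs_moment in simp_all)
  finally show ?thesis
    by simp
qed

lemma DERIV_kernel_conv:
  assumes F: "\<And>x. (F has_real_derivative f x) (at x)"
    and f: "continuous_on UNIV f" "\<And>x. \<bar>f x\<bar> \<le> M"
    and lip: "\<And>u v. \<bar>f u - f v\<bar> \<le> B * \<bar>u - v\<bar>"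
  shows "(kernel_conv F has_real_derivative kernel_conv f z) (at z)"
proof (rule DERIV_of_quadratic_remainder[where C = B])
  fix t
  have F_cont: "continuous_on UNIV F"
    using F by (meson DERIV_isCont continuous_at_imp_continuous_on)
  have F_lip: "\<And>u v. \<bar>F u - F v\<bar> \<le> M * \<bar>u - v\<bar>"
    using lipschitz_of_deriv_bounded[OF F f(2)] .
  define R where "R w = J w * (F (z + t - w) - F (z - w) - t * f (z - w))" for w
  have "R = (\<lambda>w. J w * F (z + t - w) - J w * F (z - w) - t * (J w * f (z - w)))"
    by (auto simp: R_def algebra_simps)
  then have R_int: "integrable lebesgue R"
    using integrable_conv_lipschitz[OF F_cont F_lip] integrable_conv[OF f]
    by (simp del: integrable_mult_right_iff)
  have "kernel_conv F (z + t) - kernel_conv F z - t * kernel_conv f z = (LINT w|lebesgue. R w)"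
    using integrable_conv_lipschitz[OF F_cont F_lip] integrable_conv[OF f]
    unfolding R_def kernel_conv_def by (simp add: right_diff_distrib algebra_simps)
  also have "\<bar>\<dots>\<bar> \<le> (LINT w|lebesgue. \<bar>R w\<bar>)"
    using integral_norm_bound[of lebesgue R] by simp
  also have "\<dots> \<le> (LINT w|lebesgue. B * t\<^sup>2 * J w)"
  proof (rule integral_mono)
    fix w
    have "\<bar>R w\<bar> = J w * \<bar>F (z - w + t) - F (z - w) - t * f (z - w)\<bar>"
      using J_nonneg[of w] by (simp add: R_def abs_mult diff_add_eq)
    also have "\<dots> \<le> J w * (B * t\<^sup>2)"
      using primitive_taylor_remainder_le[OF F lip] J_nonneg by (rule mult_left_mono)
    finally show "\<bar>R w\<bar> \<le> B * t\<^sup>2 * J w"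
      by (simp add: mult_ac)
  qed (use R_int J_integrable in simp_all)
  finally show "\<bar>kernel_conv F (z + t) - kernel_conv F z - t * kernel_conv f z\<bar> \<le> B * t\<^sup>2"
    using J_mass by simp
qed

lemma DERIV_nonlocal_op:
  assumes F: "\<And>x. (F has_real_derivative f x) (at x)"
    and "continuous_on UNIV f" "\<And>x. \<bar>f x\<bar> \<le> M"
    and "\<And>u v. \<bar>f u - f v\<bar> \<le> B * \<bar>u - v\<bar>"
  shows "(nonlocal_op J F has_real_derivative nonlocal_op J f z) (at z)"
  unfolding nonlocal_op_eq_kernel_conv using assms by (intro DERIV_diff DERIV_kernel_conv F)

lemma deriv_abs_le_if_nonlocal_eq:
  fixes \<phi> \<phi>' g :: "real \<Rightarrow> real"
  assumes "continuous_on UNIV \<phi>" "\<And>z. \<bar>\<phi> z\<bar> \<le> M" "s > 0" "d \<ge> 0"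
    and g_bounded: "\<And>z. \<bar>g z\<bar> \<le> Gb"
    and eq: "\<And>z. - s * \<phi>' z = d * nonlocal_op J \<phi> z + g z"
  shows "\<bar>\<phi>' z\<bar> \<le> (d * (2 * M) + Gb) / s"
proof -
  have "s * \<bar>\<phi>' z\<bar> = \<bar>- s * \<phi>' z\<bar>"
    using \<open>s > 0\<close> by (simp add: abs_mult)
  also have "\<dots> \<le> d * \<bar>nonlocal_op J \<phi> z\<bar> + \<bar>g z\<bar>"
    unfolding eq using abs_triangle_ineq[of "d * nonlocal_op J \<phi> z" "g z"] \<open>d \<ge> 0\<close>
    by (simp add: abs_mult)
  also have "\<dots> \<le> d * (2 * M) + Gb"
    using mult_left_mono[OF nonlocal_op_abs_le[OF assms(1,2)] \<open>d \<ge> 0\<close>] g_bounded[of z]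
    by (rule add_mono)
  finally show ?thesis
    using \<open>s > 0\<close> by (simp add: pos_le_divide_eq mult.commute)
qed

lemma tendsto_zero_at_bot_if_reaction_absorbing:
  fixes \<phi> \<phi>' g :: "real \<Rightarrow> real"
  assumes \<phi>: "\<And>z. 0 \<le> \<phi> z" "\<And>z. \<phi> z \<le> M" "\<And>z. (\<phi> has_real_derivative \<phi>' z) (at z)"
    and "s > 0" "d \<ge> 0" "c > 0"
    and g_bounded: "\<And>z. \<bar>g z\<bar> \<le> Gb"
    and eq: "\<And>z. - s * \<phi>' z = d * nonlocal_op J \<phi> z + g z"
    and g_absorbing: "\<And>z. z \<le> \<zeta> \<Longrightarrow> g z \<le> - c * \<phi> z"
  shows "(\<phi> \<longlongrightarrow> 0) at_bot"
proof -
  have \<phi>_cont: "continuous_on UNIV \<phi>"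
    using \<phi>(3) by (meson DERIV_isCont continuous_at_imp_continuous_on)
  have \<phi>_abs: "\<And>z. \<bar>\<phi> z\<bar> \<le> M"
    using \<phi>(1,2) by (simp add: abs_of_nonneg)
  note \<phi>_lip = lipschitz_of_deriv_bounded[OF \<phi>(3)
      deriv_abs_le_if_nonlocal_eq[OF \<phi>_cont \<phi>_abs \<open>s > 0\<close> \<open>d \<ge> 0\<close> g_bounded eq]]
  have "\<exists>\<Phi>. \<forall>x. (\<Phi> has_vector_derivative \<phi> x) (at x)"
    using einterval_antiderivative[of "-\<infinity>" "\<infinity>" \<phi>] DERIV_isCont[OF \<phi>(3)] by auto
  then obtain \<Phi> where \<Phi>: "\<And>x. (\<Phi> has_real_derivative \<phi> x) (at x)"
    by (auto simp: has_real_derivative_iff_has_vector_derivative)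
  have \<Phi>_cont: "continuous_on UNIV \<Phi>"
    using \<Phi> by (meson DERIV_isCont continuous_at_imp_continuous_on)
  note \<Phi>_lip = lipschitz_of_deriv_bounded[OF \<Phi> \<phi>_abs]
  define G where "G z = s * \<phi> z + d * nonlocal_op J \<Phi> z" for z
  show ?thesis
  proof (rule tendsto_zero_at_bot_if_primitive_bdd_below
      [where G = G and g = "\<lambda>z. - g z", OF _ _ \<open>c > 0\<close> _ \<phi>(1) \<phi>_lip])
    have "(G has_real_derivative s * \<phi>' z + d * nonlocal_op J \<phi> z) (at z)" for z
      unfolding G_def[abs_def]
      by (intro DERIV_add DERIV_cmult \<phi>(3) DERIV_nonlocal_op[OF \<Phi> \<phi>_cont \<phi>_abs \<phi>_lip])
    moreover have "s * \<phi>' z + d * nonlocal_op J \<phi> z = - g z" for z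
      using eq[of z] by linarith
    ultimately show "(G has_real_derivative - g z) (at z)" for z
      by simp
    have "- (d * (M * (LINT w|lebesgue. J w * \<bar>w\<bar>))) \<le> G z" for z
    proof -
      have "\<bar>d * nonlocal_op J \<Phi> z\<bar> \<le> d * (M * (LINT w|lebesgue. J w * \<bar>w\<bar>))"
        using mult_left_mono[OF nonlocal_op_lipschitz_abs_le[OF \<Phi>_cont \<Phi>_lip] \<open>d \<ge> 0\<close>] \<open>d \<ge> 0\<close>
        by (simp add: abs_mult)
      moreover have "0 \<le> s * \<phi> z"
        using \<phi>(1)[of z] \<open>s > 0\<close> by simp
      ultimately show ?thesis
        unfolding G_def by linarith
    qed
    then show "bdd_below (G ` {..\<zeta>})"
      by (rule bdd_belowI2)
    show "c * \<phi> z \<le> - g z" if "z \<le> \<zeta>" for z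
      using g_absorbing[OF that] by simp
  qed
qed

end

lemma moment_kernel_if_kernel_cond:
  assumes "kernel_cond J"
  shows "moment_kernel J"
proof -
  have "\<forall>y. 0 \<le> J y" "integrable lebesgue J" "(LINT y|lebesgue. J y) = 1"
    using assms unfolding kernel_cond_def by blast+
  then show ?thesis
    using kernel_cond_integrable_abs_moment[OF assms] by unfold_locales auto
qed

lemma admissible_DERIV:
  assumes "admissible \<phi>"
  shows "(\<phi> has_real_derivative deriv \<phi> z) (at z)"
proof -
  obtain D where "\<And>x. (\<phi> has_vector_derivative D x) (at x)"
    using assms unfolding admissible_def C1_differentiable_on_def by blast
  then show ?thesis
    by (metis DERIV_imp_deriv has_real_derivative_iff_has_vector_derivative)
qed

lemma admissible_le_bound:
  assumes "admissible \<phi>"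
  obtains M where "\<And>z. \<phi> z \<le> M"
proof -
  obtain M where "\<forall>x\<in>range \<phi>. \<bar>x\<bar> \<le> M"
    using assms unfolding admissible_def bounded_real by blast
  then show thesis
    by (intro that[of M]) (auto dest: abs_le_D1)
qed

lemma tendsto_zero_at_bot_if_rate_eventually_negative:
  fixes \<phi> q :: "real \<Rightarrow> real"
  assumes "kernel_cond J" "admissible \<phi>" "s > 0" "d > 0" "r > 0" "c > 0"
    and "bounded (range q)" "\<forall>\<^sub>F z in at_bot. q z \<le> - c"
    and "\<forall>z. - s * deriv \<phi> z = d * nonlocal_op J \<phi> z + r * \<phi> z * q z"
  shows "(\<phi> \<longlongrightarrow> 0) at_bot"
proof -
  interpret moment_kernel J
    using moment_kernel_if_kernel_cond[OF assms(1)] .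
  obtain M where M: "\<And>z. \<phi> z \<le> M"
    using admissible_le_bound[OF assms(2)] by blast
  obtain Q where Q: "\<And>z. \<bar>q z\<bar> \<le> Q"
    using assms(7) unfolding bounded_real by blast
  obtain z0 where z0: "\<And>z. z \<le> z0 \<Longrightarrow> q z \<le> - c"
    using assms(8) unfolding eventually_at_bot_linorder by blast
  have \<phi>_nonneg: "\<And>z. 0 \<le> \<phi> z"
    using assms(2) unfolding admissible_def by blast
  show ?thesis
  proof (rule tendsto_zero_at_bot_if_reaction_absorbing
      [OF \<phi>_nonneg M admissible_DERIV[OF assms(2)] assms(3) _ _ _ assms(9)[rule_format],
        where c = "r * c" and Gb = "r * M * Q" and \<zeta> = z0])
    show "\<bar>r * \<phi> z * q z\<bar> \<le> r * M * Q" for z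
    proof -
      have "\<phi> z * \<bar>q z\<bar> \<le> M * Q"
        using \<phi>_nonneg[of z] M[of z] Q[of z] by (intro mult_mono) auto
      then show ?thesis
        using \<phi>_nonneg[of z] \<open>r > 0\<close> by (simp add: abs_mult mult.assoc)
    qed
    show "r * \<phi> z * q z \<le> - (r * c) * \<phi> z" if "z \<le> z0" for z
      using mult_left_mono[OF z0[OF that], of "r * \<phi> z"] \<phi>_nonneg[of z] \<open>r > 0\<close>
      by (simp add: mult_ac)
    show "0 \<le> d" "0 < r * c"
      using assms(4-6) by simp_all
  qed
qed

lemma alpha_cond_bounded:
  assumes "alpha_cond \<alpha>"
  shows "bounded (range \<alpha>)"
proof -
  obtain am ap where cont: "continuous_on UNIV \<alpha>"
    and lim: "(\<alpha> \<longlongrightarrow> am) at_bot" "(\<alpha> \<longlongrightarrow> ap) at_top"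
    using assms unfolding alpha_cond_def by blast
  obtain N1 where N1: "\<And>z. z \<le> N1 \<Longrightarrow> dist (\<alpha> z) am < 1"
    using tendstoD[OF lim(1), of 1] unfolding eventually_at_bot_linorder by auto
  obtain N2 where N2: "\<And>z. N2 \<le> z \<Longrightarrow> dist (\<alpha> z) ap < 1"
    using tendstoD[OF lim(2), of 1] unfolding eventually_at_top_linorder by auto
  have "\<alpha> z \<in> cball am 1 \<union> cball ap 1 \<union> \<alpha> ` {N1..N2}" for z
    using N1[of z] N2[of z] by (cases "z \<le> N1"; cases "N2 \<le> z") (auto simp: dist_commute)
  then have "range \<alpha> \<subseteq> cball am 1 \<union> cball ap 1 \<union> \<alpha> ` {N1..N2}"
    by blast
  moreover have "compact (\<alpha> ` {N1..N2})"
    using continuous_on_subset[OF cont] by (intro compact_continuous_image) auto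
  ultimately show ?thesis
    using bounded_subset bounded_Un bounded_cball compact_imp_bounded by metis
qed

lemma alpha_cond_eventually_negative:
  assumes "alpha_cond \<alpha>"
  obtains c where "c > 0" "\<forall>\<^sub>F z in at_bot. \<alpha> z \<le> - c"
proof -
  obtain am where "(\<alpha> \<longlongrightarrow> am) at_bot" "am < 0"
    using assms unfolding alpha_cond_def by blast
  then have "\<forall>\<^sub>F z in at_bot. \<alpha> z < am / 2"
    by (intro order_tendstoD(2)) auto
  then have "\<forall>\<^sub>F z in at_bot. \<alpha> z \<le> - (- am / 2)"
    by (rule eventually_mono) simp
  then show thesis
    using that[of "- am / 2"] \<open>am < 0\<close> by simp
qed

lemma bounded_range_cmult:
  fixes f :: "'a \<Rightarrow> real"
  assumes "bounded (range f)"
  shows "bounded (range (\<lambda>z. c * f z))"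
  using bounded_scaleR_comp[OF assms, of c] by simp

theorem proposition2p3:
  fixes d1 d2 d3 r1 r2 r3 a b h k s :: real
    and J1 J2 J3 \<alpha> \<phi>1 \<phi>2 \<phi>3 :: "real \<Rightarrow> real"
  assumes "d1 > 0" "d2 > 0" "d3 > 0" "r1 > 0" "r2 > 0" "r3 > 0"
    and "a > 1" "0 < h" "h < 1" "0 < k" "k < 1" "0 < b" "b < 1 / (2 * (a - 1))"
    and "kernel_cond J1" "kernel_cond J2" "kernel_cond J3"
    and "alpha_cond \<alpha>"
    and "s > 0"
    and "admissible \<phi>1" "admissible \<phi>2" "admissible \<phi>3"
    and "\<forall>z. - s * deriv \<phi>1 z = d1 * nonlocal_op J1 \<phi>1 z
              + r1 * \<phi>1 z * (- 1 - \<phi>1 z - k * \<phi>2 z + a * \<phi>3 z)"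
    and "\<forall>z. - s * deriv \<phi>2 z = d2 * nonlocal_op J2 \<phi>2 z
              + r2 * \<phi>2 z * (- 1 - h * \<phi>1 z - \<phi>2 z + a * \<phi>3 z)"
    and "\<forall>z. - s * deriv \<phi>3 z = d3 * nonlocal_op J3 \<phi>3 z
              + r3 * \<phi>3 z * (\<alpha> z - b * \<phi>1 z - b * \<phi>2 z - \<phi>3 z)"
  shows "(\<phi>1 \<longlongrightarrow> 0) at_bot \<and> (\<phi>2 \<longlongrightarrow> 0) at_bot \<and> (\<phi>3 \<longlongrightarrow> 0) at_bot"
proof -
  have bnd: "bounded (range \<phi>1)" "bounded (range \<phi>2)" "bounded (range \<phi>3)"
    and nonneg: "\<And>z. 0 \<le> \<phi>1 z" "\<And>z. 0 \<le> \<phi>2 z" "\<And>z. 0 \<le> \<phi>3 z"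
    using assms(19-21) unfolding admissible_def by blast+
  have rate_le: "\<alpha> z - b * \<phi>1 z - b * \<phi>2 z - \<phi>3 z \<le> \<alpha> z"
    "- 1 - \<phi>1 z - k * \<phi>2 z + a * \<phi>3 z \<le> - 1 + a * \<phi>3 z"
    "- 1 - h * \<phi>1 z - \<phi>2 z + a * \<phi>3 z \<le> - 1 + a * \<phi>3 z" for z
    using nonneg(1-3)[of z] assms(8,10,12) by (smt (verit) mult_nonneg_nonneg)+
  obtain c where "c > 0" and "\<forall>\<^sub>F z in at_bot. \<alpha> z \<le> - c"
    using alpha_cond_eventually_negative[OF assms(17)] by blast
  then have \<phi>3: "(\<phi>3 \<longlongrightarrow> 0) at_bot"
    using alpha_cond_bounded[OF assms(17)] bnd
    by (intro tendsto_zero_at_bot_if_rate_eventually_negative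
        [OF assms(16,21,18,3,6) \<open>c > 0\<close> _ _ assms(24)] bounded_minus_comp bounded_range_cmult eventually_mono[OF _ order_trans[OF rate_le(1)]])
  have small: "\<forall>\<^sub>F z in at_bot. a * \<phi>3 z < 1 / 2"
    using tendsto_mult_right_zero[OF \<phi>3, of a] by (rule order_tendstoD(2)) simp
  have "(\<phi>1 \<longlongrightarrow> 0) at_bot"
    using bnd small
    by (intro tendsto_zero_at_bot_if_rate_eventually_negative
        [where c = "1 / 2", OF assms(14,19,18,1,4) _ _ _ assms(22)] bounded_plus_comp bounded_minus_comp bounded_range_cmult eventually_mono[OF small])
      (auto intro: order_trans[OF rate_le(2)])
  moreover have "(\<phi>2 \<longlongrightarrow> 0) at_bot"
    using bnd small
    by (intro tendsto_zero_at_bot_if_rate_eventually_negative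
        [where c = "1 / 2", OF assms(15,20,18,2,5) _ _ _ assms(23)] bounded_plus_comp bounded_minus_comp bounded_range_cmult eventually_mono[OF small])
      (auto intro: order_trans[OF rate_le(3)])
  ultimately show ?thesis
    using \<phi>3 by blast
qed

end
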